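(* Let $H$ be a graph with $t\geq 1$ vertices and $q$ edges, and assume that $H$ contains a 2-degenerate spanning subgraph $H'$ with $q'$ edges. Let $G$ be a graph with $n\geq 1$ vertices and minimum degree $\delta$, with $2\delta-n\geq q-q'+t-2$. Then $G$ contains a $(\leq 1)$-subdivision of $H$ as a subgraph.
   Context: All graphs are finite and simple. A graph is 2-degenerate if every non-empty subgraph of it has a vertex of degree at most 2. A subgraph $H'$ of $H$ is spanning if $V(H')=V(H)$. A $(\leq 1)$-subdivision of $H$ is a graph obtained from $H$ by subdividing each edge of $H$ at most once (i.e., replacing some edges by paths of length 2 through new vertices). *)

theory Defs
  imports Main
begin

definition graph :: "'a set \<Rightarrow> 'a set set \<Rightarrow> bool" where
  "graph V E \<longleftrightarrow> finite V \<and> (\<forall>e\<in>E. \<exists>u v. u \<in> V \<and> v \<in> V \<and> u \<noteq> v \<and> e = {u, v})"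

definition degree :: "'a set set \<Rightarrow> 'a \<Rightarrow> nat" where
  "degree E v = card {e \<in> E. v \<in> e}"

definition min_degree :: "'a set \<Rightarrow> 'a set set \<Rightarrow> nat" where
  "min_degree V E = Min (degree E ` V)"

definition subgraph :: "'a set \<Rightarrow> 'a set set \<Rightarrow> 'a set \<Rightarrow> 'a set set \<Rightarrow> bool" where
  "subgraph V' E' V E \<longleftrightarrow> graph V' E' \<and> V' \<subseteq> V \<and> E' \<subseteq> E"

definition spanning_subgraph :: "'a set \<Rightarrow> 'a set set \<Rightarrow> 'a set \<Rightarrow> 'a set set \<Rightarrow> bool" where
  "spanning_subgraph V' E' V E \<longleftrightarrow> subgraph V' E' V E \<and> V' = V"

definition two_degenerate :: "'a set \<Rightarrow> 'a set set \<Rightarrow> bool" where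
  "two_degenerate V E \<longleftrightarrow>
     (\<forall>V' E'. subgraph V' E' V E \<and> V' \<noteq> {} \<longrightarrow> (\<exists>v\<in>V'. degree E' v \<le> 2))"

text \<open>G contains a (<=1)-subdivision of H as a subgraph: there is an injective map f of the
  branch vertices and, for each edge of H, either the edge is kept (its image is an edge of G),
  or it is subdivided once through a new vertex m e of G, which is not a branch vertex, with
  distinct subdivided edges using distinct new vertices.\<close>
definition contains_le1_subdivision ::
  "'b set \<Rightarrow> 'b set set \<Rightarrow> 'a set \<Rightarrow> 'a set set \<Rightarrow> bool" where
  "contains_le1_subdivision VG EG VH EH \<longleftrightarrow>
     (\<exists>(f :: 'a \<Rightarrow> 'b) (m :: 'a set \<Rightarrow> 'b option).
        inj_on f VH \<and> f ` VH \<subseteq> VG \<and>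
        (\<forall>e\<in>EH. \<forall>e'\<in>EH. m e \<noteq> None \<and> m e = m e' \<longrightarrow> e = e') \<and>
        (\<forall>e\<in>EH. case m e of
            None \<Rightarrow> f ` e \<in> EG
          | Some w \<Rightarrow> w \<in> VG \<and> w \<notin> f ` VH \<and> (\<forall>u\<in>e. {f u, w} \<in> EG)))"

end

theory Submission
  imports Defs
begin

text \<open>Any two vertices of \<open>G\<close> have at least \<open>2\<delta> - n\<close> common neighbours, and a single vertex
  has at least \<open>\<delta> \<ge> 2\<delta> - n + 1\<close> neighbours. Hence the branch vertices can be placed greedily
  along a 2-degenerate ordering of \<open>H'\<close>: each new vertex has at most two earlier neighbours,
  whose images have more common neighbours than there are used vertices. Afterwards each of the
  \<open>q - q'\<close> remaining edges of \<open>H\<close> is subdivided through a fresh common neighbour of the images of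
  its ends; the \<open>t\<close> branch vertices and the subdivision vertices chosen so far never exhaust
  the \<open>2\<delta> - n \<ge> q - q' + t - 2\<close> common neighbours.\<close>

definition common_neighbours :: "'a set \<Rightarrow> 'a set set \<Rightarrow> 'a set \<Rightarrow> 'a set" where
  "common_neighbours V E A = {w \<in> V. \<forall>x\<in>A. {x, w} \<in> E}"

definition graph_embedding ::
  "('a \<Rightarrow> 'b) \<Rightarrow> 'a set \<Rightarrow> 'a set set \<Rightarrow> 'b set \<Rightarrow> 'b set set \<Rightarrow> bool" where
  "graph_embedding f S E VG EG \<longleftrightarrow>
     inj_on f S \<and> f ` S \<subseteq> VG \<and> (\<forall>e\<in>E. e \<subseteq> S \<longrightarrow> f ` e \<in> EG)"

lemma graph_finite_edges: "graph V E \<Longrightarrow> finite E"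
  unfolding graph_def by (rule finite_subset[of E "Pow V"]) auto

lemma graph_no_loop:
  assumes "graph V E"
  shows "{a} \<notin> E"
proof
  assume "{a} \<in> E"
  then obtain u v where "u \<noteq> v" "{a} = {u, v}" using assms unfolding graph_def by blast
  then show False by (metis insertCI singletonD)
qed

lemma graph_edge_through:
  assumes "graph V E" "e \<in> E" "v \<in> e"
  obtains u where "u \<in> V" "u \<noteq> v" "e = {v, u}"
  using assms unfolding graph_def by (auto simp: insert_commute)

lemma card_neighbours_eq_degree:
  assumes g: "graph V E" and "a \<in> V"
  shows "card (common_neighbours V E {a}) = degree E a"
proof -
  have "(\<lambda>w. {a, w}) ` common_neighbours V E {a} = {e \<in> E. a \<in> e}"
  proof (intro equalityI subsetI)
    fix e assume e: "e \<in> {e \<in> E. a \<in> e}"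
    then obtain u where "u \<in> V" "e = {a, u}" using graph_edge_through[OF g] by blast
    then show "e \<in> (\<lambda>w. {a, w}) ` common_neighbours V E {a}"
      using e by (auto simp: common_neighbours_def)
  qed (auto simp: common_neighbours_def)
  moreover have "inj_on (\<lambda>w. {a, w}) (common_neighbours V E {a})"
    by (auto simp: inj_on_def doubleton_eq_iff)
  ultimately show ?thesis unfolding degree_def by (metis card_image)
qed

lemma min_degree_le_card_neighbours:
  assumes "graph V E" "a \<in> V"
  shows "min_degree V E \<le> card (common_neighbours V E {a})"
  using assms card_neighbours_eq_degree[OF assms]
  unfolding min_degree_def graph_def by auto

lemma min_degree_less_card:
  assumes g: "graph V E" and "V \<noteq> {}"
  shows "min_degree V E < card V"
proof -
  obtain a where a: "a \<in> V" using assms(2) by blast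
  have fin: "finite V" using g unfolding graph_def by blast
  have "common_neighbours V E {a} \<subseteq> V - {a}"
    using graph_no_loop[OF g] unfolding common_neighbours_def by auto
  then have "card (common_neighbours V E {a}) < card V"
    using fin a by (metis card_Diff1_less card_mono finite_Diff le_less_trans)
  then show ?thesis using min_degree_le_card_neighbours[OF g a] by linarith
qed

lemma card_common_neighbours_pair:
  assumes g: "graph V E" and "a \<in> V" "b \<in> V"
  shows "2 * int (min_degree V E) - int (card V) \<le> int (card (common_neighbours V E {a, b}))"
proof -
  have fin: "finite V" using g unfolding graph_def by blast
  let ?A = "common_neighbours V E {a}" and ?B = "common_neighbours V E {b}"
  have eq: "common_neighbours V E {a, b} = ?A \<inter> ?B" unfolding common_neighbours_def by auto
  have "card ?A + card ?B = card (?A \<union> ?B) + card (?A \<inter> ?B)"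
    using fin by (intro card_Un_Int) (auto simp: common_neighbours_def)
  moreover have "card (?A \<union> ?B) \<le> card V"
    using fin by (intro card_mono) (auto simp: common_neighbours_def)
  ultimately show ?thesis unfolding eq
    using min_degree_le_card_neighbours[OF g assms(2)] min_degree_le_card_neighbours[OF g assms(3)]
    by linarith
qed

lemma card_common_neighbours_small:
  assumes g: "graph V E" and "V \<noteq> {}" and A: "A \<subseteq> V" "card A \<le> 2"
  shows "2 * int (min_degree V E) - int (card V) + 2
           \<le> int (card (common_neighbours V E A)) + int (card A)"
proof -
  have fin: "finite A" using A g unfolding graph_def by (auto intro: finite_subset)
  have less: "min_degree V E < card V" using min_degree_less_card[OF g assms(2)] .
  consider "card A = 0" | "card A = 1" | "card A = 2" using A(2) by linarith
  then show ?thesis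
  proof cases
    case 1
    then have "A = {}" using fin by simp
    then show ?thesis using less by (simp add: common_neighbours_def)
  next
    case 2
    then obtain a where "A = {a}" by (rule card_1_singletonE)
    then show ?thesis using less min_degree_le_card_neighbours[OF g, of a] A(1) by simp
  next
    case 3
    then obtain a b where "A = {a, b}" by (meson card_2_iff)
    then show ?thesis using 3 card_common_neighbours_pair[OF g, of a b] A(1) by simp
  qed
qed

text \<open>No common neighbour of \<open>A\<close> lies in \<open>A\<close> itself, so \<open>A\<close> and the common neighbours inside \<open>F\<close>
  are disjoint parts of \<open>F\<close>.\<close>

lemma common_neighbour_outside:
  assumes g: "graph V E" and "A \<subseteq> F" "F \<subseteq> V"
    and "card F < card (common_neighbours V E A) + card A"
  obtains w where "w \<in> common_neighbours V E A" "w \<notin> F"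
proof -
  let ?C = "common_neighbours V E A"
  have fin: "finite F" using assms(3) g unfolding graph_def by (auto intro: finite_subset)
  have disj: "?C \<inter> A = {}" using graph_no_loop[OF g] unfolding common_neighbours_def by auto
  have "\<not> ?C \<subseteq> F"
  proof
    assume "?C \<subseteq> F"
    then have "card (?C \<union> A) \<le> card F" using assms(2) fin by (intro card_mono) auto
    moreover have "card (?C \<union> A) = card ?C + card A"
      using disj \<open>?C \<subseteq> F\<close> assms(2) fin by (intro card_Un_disjoint) (auto intro: finite_subset)
    ultimately show False using assms(4) by linarith
  qed
  then show ?thesis using that by blast
qed

lemma graph_embedding_insert:
  assumes gH: "graph VH E" and emb: "graph_embedding f S E VG EG" and "v \<notin> S"
    and "w \<in> VG" "w \<notin> f ` S" and adj: "\<And>u. u \<in> S \<Longrightarrow> {u, v} \<in> E \<Longrightarrow> {f u, w} \<in> EG"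
  shows "graph_embedding (f(v := w)) (insert v S) E VG EG"
proof -
  have on_S: "(f(v := w)) ` S = f ` S" "inj_on (f(v := w)) S = inj_on f S"
    using \<open>v \<notin> S\<close> by (auto intro!: image_cong inj_on_cong)
  have "(f(v := w)) ` e \<in> EG" if e: "e \<in> E" "e \<subseteq> insert v S" for e
  proof (cases "v \<in> e")
    case False
    then have "(f(v := w)) ` e = f ` e" by (auto intro!: image_cong)
    then show ?thesis using emb e False unfolding graph_embedding_def by auto
  next
    case True
    then obtain u where "u \<noteq> v" "e = {v, u}" using graph_edge_through[OF gH e(1)] by blast
    then show ?thesis
      using adj[of u] e \<open>v \<notin> S\<close> by (auto simp: insert_commute)
  qed
  then show ?thesis
    using emb on_S assms(3-5) unfolding graph_embedding_def by auto
qed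

lemma two_degenerate_low_degree_vertex:
  assumes g: "graph V E" and deg: "two_degenerate V E" and "S \<subseteq> V" "S \<noteq> {}"
  obtains v where "v \<in> S" "card {u \<in> S. {u, v} \<in> E} \<le> 2"
proof -
  define ES where "ES = {e \<in> E. e \<subseteq> S}"
  have "graph S ES"
    unfolding graph_def
  proof (intro conjI ballI)
    show "finite S" using g assms(3) unfolding graph_def by (auto intro: finite_subset)
    fix e assume e: "e \<in> ES"
    then obtain u w where "u \<noteq> w" "e = {u, w}" using g unfolding ES_def graph_def by blast
    then show "\<exists>u v. u \<in> S \<and> v \<in> S \<and> u \<noteq> v \<and> e = {u, v}"
      using e unfolding ES_def by blast
  qed
  then have "subgraph S ES V E" using assms(3) unfolding subgraph_def ES_def by blast
  then obtain v where v: "v \<in> S" "degree ES v \<le> 2"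
    using deg[unfolded two_degenerate_def, rule_format, of S ES] assms(4) by blast
  have "card {u \<in> S. {u, v} \<in> E} \<le> card {e \<in> ES. v \<in> e}"
  proof (rule card_inj_on_le[of "\<lambda>u. {u, v}"])
    show "inj_on (\<lambda>u. {u, v}) {u \<in> S. {u, v} \<in> E}"
      by (auto simp: inj_on_def doubleton_eq_iff)
    show "(\<lambda>u. {u, v}) ` {u \<in> S. {u, v} \<in> E} \<subseteq> {e \<in> ES. v \<in> e}"
      using v(1) by (auto simp: ES_def)
    show "finite {e \<in> ES. v \<in> e}" using graph_finite_edges[OF g] by (simp add: ES_def)
  qed
  then show ?thesis using that[OF v(1)] v(2) unfolding degree_def by linarith
qed

lemma two_degenerate_graph_embedding:
  assumes gH: "graph VH E" and deg: "two_degenerate VH E" and gG: "graph VG EG"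
    and room: "\<And>A. A \<subseteq> VG \<Longrightarrow> card A \<le> 2 \<Longrightarrow>
                 card VH \<le> card (common_neighbours VG EG A) + card A"
  obtains f where "graph_embedding f VH E VG EG"
proof -
  have finVH: "finite VH" using gH unfolding graph_def by blast
  have "S \<subseteq> VH \<Longrightarrow> \<exists>f. graph_embedding f S E VG EG" for S
  proof (induction "card S" arbitrary: S rule: less_induct)
    case less
    show ?case
    proof (cases "S = {}")
      case True
      then show ?thesis using gH by (auto simp: graph_embedding_def graph_def)
    next
      case False
      obtain v where v: "v \<in> S" "card {u \<in> S. {u, v} \<in> E} \<le> 2"
        using two_degenerate_low_degree_vertex[OF gH deg less.prems False] .
      define S' where "S' = S - {v}"
      have S'_less: "card S' < card S"
        using v(1) less.prems finVH unfolding S'_def by (meson card_Diff1_less finite_subset)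
      obtain f where f: "graph_embedding f S' E VG EG"
        using less.hyps[OF S'_less] less.prems unfolding S'_def by blast
      define N where "N = {u \<in> S'. {u, v} \<in> E}"
      have finS: "finite S" using finVH less.prems by (rule finite_subset[rotated])
      have "N \<subseteq> {u \<in> S. {u, v} \<in> E}" by (auto simp: N_def S'_def)
      then have "card N \<le> 2" "finite N"
        using v(2) card_mono[of "{u \<in> S. {u, v} \<in> E}" N] finS by (auto intro: finite_subset)
      then have "card (f ` N) \<le> 2" using card_image_le[of N f] by linarith
      have NS': "f ` N \<subseteq> f ` S'" and S'G: "f ` S' \<subseteq> VG"
        using f unfolding N_def graph_embedding_def by auto
      have "card (f ` S') < card VH"
        using f S'_less card_mono[OF finVH less.prems]
        by (simp add: graph_embedding_def card_image)
      moreover have "card VH \<le> card (common_neighbours VG EG (f ` N)) + card (f ` N)"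
        using NS' S'G \<open>card (f ` N) \<le> 2\<close> by (intro room) auto
      ultimately have "card (f ` S') < card (common_neighbours VG EG (f ` N)) + card (f ` N)"
        by linarith
      then obtain w where w: "w \<in> common_neighbours VG EG (f ` N)" "w \<notin> f ` S'"
        by (rule common_neighbour_outside[OF gG NS' S'G])
      have "graph_embedding (f(v := w)) (insert v S') E VG EG"
      proof (rule graph_embedding_insert[OF gH f])
        show "v \<notin> S'" by (simp add: S'_def)
        show "w \<in> VG" "w \<notin> f ` S'" using w by (simp_all add: common_neighbours_def)
        show "{f u, w} \<in> EG" if "u \<in> S'" "{u, v} \<in> E" for u
          using w(1) that by (simp add: common_neighbours_def N_def)
      qed
      moreover have "insert v S' = S" using v(1) by (auto simp: S'_def)
      ultimately show ?thesis by auto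
    qed
  qed
  then show ?thesis using that by blast
qed

lemma subdivision_vertices:
  assumes gG: "graph VG EG" and f: "inj_on f VH" "f ` VH \<subseteq> VG" and gD: "graph VH D"
    and room: "\<And>A. A \<subseteq> VG \<Longrightarrow> card A = 2 \<Longrightarrow>
                 card VH + card D \<le> card (common_neighbours VG EG A) + card A"
  obtains g where "inj_on g D" "\<forall>e\<in>D. g e \<in> common_neighbours VG EG (f ` e) - f ` VH"
proof -
  have finVH: "finite VH" using gD unfolding graph_def by blast
  have finD: "finite D" using graph_finite_edges[OF gD] .
  have "finite D0 \<Longrightarrow> D0 \<subseteq> D \<Longrightarrow>
          \<exists>g. inj_on g D0 \<and> (\<forall>e\<in>D0. g e \<in> common_neighbours VG EG (f ` e) - f ` VH)" for D0
  proof (induction D0 rule: finite_induct)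
    case empty
    then show ?case by simp
  next
    case (insert e D0)
    then obtain g where g: "inj_on g D0" "\<forall>e\<in>D0. g e \<in> common_neighbours VG EG (f ` e) - f ` VH"
      by blast
    obtain x y where xy: "x \<in> VH" "y \<in> VH" "x \<noteq> y" "e = {x, y}"
      using gD insert.prems unfolding graph_def by blast
    define F where "F = f ` VH \<union> g ` D0"
    have eF: "f ` e \<subseteq> F" and FG: "F \<subseteq> VG"
      using xy f(2) g(2) by (auto simp: F_def common_neighbours_def)
    have card_e: "card (f ` e) = 2" using xy f(1) by (simp add: inj_on_eq_iff)
    have "card F \<le> card (f ` VH) + card (g ` D0)" unfolding F_def by (rule card_Un_le)
    also have "\<dots> \<le> card VH + card D0"
      using card_image_le[OF finVH] card_image_le[OF insert.hyps(1)] by (rule add_mono)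
    also have "\<dots> < card VH + card D"
      using card_mono[OF finD insert.prems] insert.hyps by simp
    also have "\<dots> \<le> card (common_neighbours VG EG (f ` e)) + card (f ` e)"
      using eF FG card_e by (intro room) auto
    finally obtain w where w: "w \<in> common_neighbours VG EG (f ` e)" "w \<notin> F"
      by (rule common_neighbour_outside[OF gG eF FG])
    have "inj_on (g(e := w)) (insert e D0)"
      using g(1) w(2) insert.hyps(2) by (auto simp: F_def inj_on_fun_updI fun_upd_image)
    moreover have "\<forall>e'\<in>insert e D0. (g(e := w)) e' \<in> common_neighbours VG EG (f ` e') - f ` VH"
      using g(2) w insert.hyps(2) by (auto simp: F_def)
    ultimately show ?case by blast
  qed
  then show ?thesis using that finD by blast
qed

lemma contains_le1_subdivisionI:
  assumes gH: "graph VH EH" and f: "graph_embedding f VH (EH - D) VG EG"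
    and g: "inj_on g D" "\<forall>e\<in>D. g e \<in> common_neighbours VG EG (f ` e) - f ` VH"
  shows "contains_le1_subdivision VG EG VH EH"
  unfolding contains_le1_subdivision_def
proof (intro exI conjI)
  define m where "m e = (if e \<in> D then Some (g e) else None)" for e
  show "inj_on f VH" "f ` VH \<subseteq> VG" using f unfolding graph_embedding_def by auto
  show "\<forall>e\<in>EH. \<forall>e'\<in>EH. m e \<noteq> None \<and> m e = m e' \<longrightarrow> e = e'"
    using g(1) by (auto simp: m_def inj_on_def split: if_splits)
  have "e \<subseteq> VH" if "e \<in> EH" for e using gH that unfolding graph_def by auto
  then show "\<forall>e\<in>EH. case m e of
      None \<Rightarrow> f ` e \<in> EG
    | Some w \<Rightarrow> w \<in> VG \<and> w \<notin> f ` VH \<and> (\<forall>u\<in>e. {f u, w} \<in> EG)"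
    using f g(2) by (auto simp: m_def graph_embedding_def common_neighbours_def)
qed

theorem lemma13:
  fixes VH :: "'a set" and EH EH' :: "'a set set"
    and VG :: "'b set" and EG :: "'b set set"
  assumes "graph VH EH" and "card VH \<ge> 1"
    and "spanning_subgraph VH EH' VH EH" and "two_degenerate VH EH'"
    and "graph VG EG" and "card VG \<ge> 1"
    and "2 * int (min_degree VG EG) - int (card VG)
           \<ge> int (card EH) - int (card EH') + int (card VH) - 2"
  shows "contains_le1_subdivision VG EG VH EH"
proof -
  note gH = assms(1) and gG = assms(5)
  have gH': "graph VH EH'" and sub: "EH' \<subseteq> EH"
    using assms(3) unfolding spanning_subgraph_def subgraph_def by simp_all
  define D where "D = EH - EH'"
  have gD: "graph VH D" using gH unfolding graph_def D_def by blast
  have "int (card D) = int (card EH) - int (card EH')"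
    using sub graph_finite_edges[OF gH] by (simp add: D_def card_Diff_subset card_mono finite_subset)
  moreover have "VG \<noteq> {}" using assms(6) by auto
  ultimately have room: "card VH + card D \<le> card (common_neighbours VG EG A) + card A"
    if "A \<subseteq> VG" "card A \<le> 2" for A
    using card_common_neighbours_small[OF gG _ that] assms(7) by linarith
  have "card VH \<le> card (common_neighbours VG EG A) + card A"
    if "A \<subseteq> VG" "card A \<le> 2" for A
    using room[OF that] by linarith
  then obtain f where f: "graph_embedding f VH EH' VG EG"
    using two_degenerate_graph_embedding[OF gH' assms(4) gG] by blast
  then have "inj_on f VH" "f ` VH \<subseteq> VG" unfolding graph_embedding_def by simp_all
  then obtain g where "inj_on g D" "\<forall>e\<in>D. g e \<in> common_neighbours VG EG (f ` e) - f ` VH"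
    using subdivision_vertices[OF gG _ _ gD] room by (metis order_refl)
  moreover have "EH - D = EH'" using sub by (auto simp: D_def)
  ultimately show ?thesis using contains_le1_subdivisionI[OF gH] f by metis
qed

end
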